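(* Let $G=(V,E)$ be a finite graph with at least one vertex and let $w\ge k>0$ be integers. Let $\mathcal F^w_k$ be the set of all stars $\sigma=\{(A_i,B_i):i=0,\dots,n\}\subseteq\vec S_k$ with $\bigl|\bigcap_{i=0}^nB_i\bigr|<w$. Then $\vec S_k$ is $\mathcal F^w_k$-separable: for all $\vec r,\vec r\,'\in\vec S_k$ with $\vec r\le\vec r\,'$ such that $\mathcal F^w_k$ forces neither $\vec r$ nor $\overleftarrow{r'}$, there is $(X,Y)\in\vec S_k$ that is $\mathcal F^w_k$-linked to $\vec r$ and such that $(Y,X)$ is $\mathcal F^w_k$-linked to $\overleftarrow{r'}$.
   Context: An oriented vertex separation of $G$ is an ordered pair $(A,B)$ with $A\cup B=V$ and no edge between $A\setminus B$ and $B\setminus A$. They form a universe $\vec U$ with $(A,B)\le(C,D)$ iff $A\subseteq C$, $B\supseteq D$; $(A,B)^*=(B,A)$; $(A,B)\vee(C,D)=(A\cup C,B\cap D)$; $(A,B)\wedge(C,D)=(A\cap C,B\cup D)$. $\vec S_k=\{(A,B)\in\vec U:|A\cap B|<k\}$, with separations $s=\{\vec s,\vec s^{\,*}\}$; write $\overleftarrow s=\vec s^{\,*}$; $s$ is degenerate if $\vec s=\overleftarrow s$; $\vec r$ is trivial if some separation $s$ has $\vec r<\vec s$ and $\vec r<\overleftarrow s$. A star is a nonempty set $\sigma$ with $\vec r\le\overleftarrow s$ for all distinct $\vec r,\vec s\in\sigma$. $\mathcal F$ forces $\vec r$ if $\{\overleftarrow r\}\in\mathcal F$ or $r$ is degenerate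 (unforced elements are nontrivial and nondegenerate). For nontrivial nondegenerate $\vec r$, $\vec S_{\ge\vec r}$ is the set of all orientations of separations of $\vec S_k$ having an orientation $\ge\vec r$; for $\vec s_0\ge\vec r$ the shifting map $f:\vec S_{\ge\vec r}\to\vec U$ is $f(\vec s)=\vec s\vee\vec s_0$, $f(\overleftarrow s)=(\vec s\vee\vec s_0)^*$ for all $\vec s\in\vec S_{\ge\vec r}\setminus\{\overleftarrow r\}$ with $\vec s\ge\vec r$. $\vec s_0$ is linked to $\vec r$ if $\vec s_0\ge\vec r$ and $\vec s\vee\vec s_0\in\vec S_k$ for all $\vec s\in\vec S_k$ with $\vec s\ge\vec r$, $\vec s\ne\overleftarrow r$; it is $\mathcal F$-linked to $\vec r$ if moreover $f(\sigma)\in\mathcal F$ for every star $\sigma\in\mathcal F$ with $\sigma\subseteq\vec S_{\ge\vec r}\setminus\{\overleftarrow r\}$ having an element $\ge\vec r$. *)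

theory Defs
  imports Main
begin

type_synonym 'a osep = "'a set \<times> 'a set"

definition graph :: "'a set \<Rightarrow> 'a set set \<Rightarrow> bool" where
  "graph V E \<longleftrightarrow> finite V \<and> (\<forall>e\<in>E. e \<subseteq> V \<and> card e = 2)"

definition is_osep :: "'a set \<Rightarrow> 'a set set \<Rightarrow> 'a osep \<Rightarrow> bool" where
  "is_osep V E s \<longleftrightarrow> fst s \<union> snd s = V \<and>
     \<not> (\<exists>e\<in>E. e \<inter> (fst s - snd s) \<noteq> {} \<and> e \<inter> (snd s - fst s) \<noteq> {})"

definition U :: "'a set \<Rightarrow> 'a set set \<Rightarrow> 'a osep set" where
  "U V E = {s. is_osep V E s}"

definition sep_le :: "'a osep \<Rightarrow> 'a osep \<Rightarrow> bool" where
  "sep_le s t \<longleftrightarrow> fst s \<subseteq> fst t \<and> snd t \<subseteq> snd s"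

definition sep_less :: "'a osep \<Rightarrow> 'a osep \<Rightarrow> bool" where
  "sep_less s t \<longleftrightarrow> sep_le s t \<and> s \<noteq> t"

definition inv :: "'a osep \<Rightarrow> 'a osep" where
  "inv s = (snd s, fst s)"

definition sep_join :: "'a osep \<Rightarrow> 'a osep \<Rightarrow> 'a osep" where
  "sep_join s t = (fst s \<union> fst t, snd s \<inter> snd t)"

definition sep_meet :: "'a osep \<Rightarrow> 'a osep \<Rightarrow> 'a osep" where
  "sep_meet s t = (fst s \<inter> fst t, snd s \<union> snd t)"

definition Sk :: "'a set \<Rightarrow> 'a set set \<Rightarrow> nat \<Rightarrow> 'a osep set" where
  "Sk V E k = {s \<in> U V E. card (fst s \<inter> snd s) < k}"

definition degenerate :: "'a osep \<Rightarrow> bool" where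
  "degenerate s \<longleftrightarrow> s = inv s"

definition trivial :: "'a set \<Rightarrow> 'a set set \<Rightarrow> nat \<Rightarrow> 'a osep \<Rightarrow> bool" where
  "trivial V E k r \<longleftrightarrow> (\<exists>s\<in>Sk V E k. sep_less r s \<and> sep_less r (inv s))"

definition is_star :: "'a osep set \<Rightarrow> bool" where
  "is_star \<sigma> \<longleftrightarrow> \<sigma> \<noteq> {} \<and> (\<forall>r\<in>\<sigma>. \<forall>s\<in>\<sigma>. r \<noteq> s \<longrightarrow> sep_le r (inv s))"

definition forces :: "'a osep set set \<Rightarrow> 'a osep \<Rightarrow> bool" where
  "forces F r \<longleftrightarrow> {inv r} \<in> F \<or> degenerate r"

text \<open>F^w_k: stars in S_k (finite, as the vertex set is finite) whose B-sides have
  intersection of size < w.\<close>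
definition Fwk :: "'a set \<Rightarrow> 'a set set \<Rightarrow> nat \<Rightarrow> nat \<Rightarrow> 'a osep set set" where
  "Fwk V E w k = {\<sigma>. is_star \<sigma> \<and> finite \<sigma> \<and> \<sigma> \<subseteq> Sk V E k \<and> card (\<Inter>(snd ` \<sigma>)) < w}"

definition S_ge :: "'a set \<Rightarrow> 'a set set \<Rightarrow> nat \<Rightarrow> 'a osep \<Rightarrow> 'a osep set" where
  "S_ge V E k r = {s \<in> Sk V E k. sep_le r s \<or> sep_le r (inv s)}"

text \<open>Shifting map: f(s) = s \<or> s0 and f(inv s) = inv (s \<or> s0) for s \<ge> r, s \<noteq> inv r
  (well defined for nontrivial nondegenerate r).\<close>
definition shift :: "'a osep \<Rightarrow> 'a osep \<Rightarrow> 'a osep \<Rightarrow> 'a osep" where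
  "shift r s0 x = (if sep_le r x \<and> x \<noteq> inv r then sep_join x s0
                   else inv (sep_join (inv x) s0))"

definition linked :: "'a set \<Rightarrow> 'a set set \<Rightarrow> nat \<Rightarrow> 'a osep \<Rightarrow> 'a osep \<Rightarrow> bool" where
  "linked V E k s0 r \<longleftrightarrow> sep_le r s0 \<and>
     (\<forall>s\<in>Sk V E k. sep_le r s \<and> s \<noteq> inv r \<longrightarrow> sep_join s s0 \<in> Sk V E k)"

definition F_linked :: "'a set \<Rightarrow> 'a set set \<Rightarrow> nat \<Rightarrow> 'a osep set set \<Rightarrow> 'a osep \<Rightarrow> 'a osep \<Rightarrow> bool" where
  "F_linked V E k F s0 r \<longleftrightarrow> linked V E k s0 r \<and>
     (\<forall>\<sigma>\<in>F. is_star \<sigma> \<and> \<sigma> \<subseteq> S_ge V E k r - {inv r} \<and> (\<exists>s\<in>\<sigma>. sep_le r s)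
        \<longrightarrow> shift r s0 ` \<sigma> \<in> F)"

definition F_separable :: "'a set \<Rightarrow> 'a set set \<Rightarrow> nat \<Rightarrow> 'a osep set set \<Rightarrow> bool" where
  "F_separable V E k F \<longleftrightarrow>
     (\<forall>r\<in>Sk V E k. \<forall>r'\<in>Sk V E k. sep_le r r' \<and> \<not> forces F r \<and> \<not> forces F (inv r') \<longrightarrow>
        (\<exists>X Y. (X, Y) \<in> Sk V E k \<and> F_linked V E k F (X, Y) r \<and> F_linked V E k F (Y, X) (inv r')))"

end

theory Submission
  imports Defs
begin

text \<open>
  Given r \<le> r' with neither r nor inv r' forced, pick a separation x with
  r \<le> x \<le> r' of minimum order among all separations between r and r'. Then x is
  order-minimal above r and inv x is order-minimal above inv r', so it suffices to show:
  a separation x of order < k that is order-minimal above an unforced r is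
  F^w_k-linked to r.

  Linkedness follows from submodularity of the order: for s \<ge> r, the meet s \<and> x lies
  between r and x, so |s \<or> x| \<le> |s| < k. For F-linkedness, let \<sigma> be a star in F^w_k
  with an element s1 \<ge> r. Since r is not forced, |A| \<ge> w \<ge> k for r = (A,B), so r is
  not small, and hence every other element t of \<sigma> satisfies r \<le> inv t. The shifted
  star is again a star in S_k, and comparing x with the competitor x \<and> inv (\<Or> t)
  (over t \<noteq> s1) shows that shifting does not enlarge the intersection of B-sides.
\<close>

definition sep_order :: "'a osep \<Rightarrow> nat" where
  "sep_order s = card (fst s \<inter> snd s)"

text \<open>The supremum of a family of separations; intersecting with V makes the empty
  family yield (\<emptyset>, V).\<close>
definition sep_Join :: "'a set \<Rightarrow> 'a osep set \<Rightarrow> 'a osep" where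
  "sep_Join V S = (\<Union>(fst ` S), V \<inter> \<Inter>(snd ` S))"

definition min_above :: "'a set \<Rightarrow> 'a set set \<Rightarrow> 'a osep \<Rightarrow> 'a osep \<Rightarrow> bool" where
  "min_above V E r x \<longleftrightarrow> sep_le r x \<and>
     (\<forall>y\<in>U V E. sep_le r y \<and> sep_le y x \<longrightarrow> sep_order x \<le> sep_order y)"

lemma inv_inv [simp]: "inv (inv s) = s"
  by (simp add: inv_def)

lemma sep_order_inv [simp]: "sep_order (inv s) = sep_order s"
  by (simp add: sep_order_def inv_def Int_commute)

lemma sep_le_trans: "sep_le r s \<Longrightarrow> sep_le s t \<Longrightarrow> sep_le r t"
  by (auto simp: sep_le_def)

lemma sep_le_inv_iff: "sep_le (inv s) (inv t) \<longleftrightarrow> sep_le t s"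
  by (auto simp: sep_le_def inv_def)

lemma inv_U: "s \<in> U V E \<Longrightarrow> inv s \<in> U V E"
  unfolding U_def is_osep_def inv_def by auto

lemma Sk_iff: "s \<in> Sk V E k \<longleftrightarrow> s \<in> U V E \<and> sep_order s < k"
  by (simp add: Sk_def sep_order_def)

lemma inv_Sk: "s \<in> Sk V E k \<Longrightarrow> inv s \<in> Sk V E k"
  by (simp add: Sk_iff inv_U)

lemma U_sides_subset: "s \<in> U V E \<Longrightarrow> fst s \<subseteq> V \<and> snd s \<subseteq> V"
  by (auto simp: U_def is_osep_def)

lemma U_no_cross_edge:
  assumes "s \<in> U V E" "e \<in> E" "a \<in> e" "b \<in> e" "a \<in> fst s - snd s" "b \<in> snd s - fst s"
  shows False
  using assms unfolding U_def is_osep_def by auto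

lemma join_U: "s \<in> U V E \<Longrightarrow> t \<in> U V E \<Longrightarrow> sep_join s t \<in> U V E"
  unfolding U_def is_osep_def sep_join_def by (auto; blast)

lemma meet_U: "s \<in> U V E \<Longrightarrow> t \<in> U V E \<Longrightarrow> sep_meet s t \<in> U V E"
  unfolding U_def is_osep_def sep_meet_def by (auto; blast)

lemma Join_U:
  assumes "S \<subseteq> U V E"
  shows "sep_Join V S \<in> U V E"
proof -
  have sides: "fst t \<union> snd t = V" if "t \<in> S" for t
    using assms that by (auto simp: U_def is_osep_def)
  have "\<Union>(fst ` S) \<union> (V \<inter> \<Inter>(snd ` S)) = V"
    using sides by blast
  moreover have "e \<inter> (\<Union>(fst ` S) - V \<inter> \<Inter>(snd ` S)) = {} \<or>
                 e \<inter> (V \<inter> \<Inter>(snd ` S) - \<Union>(fst ` S)) = {}" if e: "e \<in> E" for e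
  proof (rule ccontr)
    assume "\<not> ?thesis"
    then obtain a b where a': "a \<in> e \<inter> (\<Union>(fst ` S) - V \<inter> \<Inter>(snd ` S))"
      and b': "b \<in> e \<inter> (V \<inter> \<Inter>(snd ` S) - \<Union>(fst ` S))"
      by blast
    then obtain t0 where ab: "a \<in> e" "b \<in> e" and t0: "t0 \<in> S" "a \<in> fst t0"
      and a: "a \<notin> V \<inter> \<Inter>(snd ` S)" and b: "b \<in> V \<inter> \<Inter>(snd ` S)" "b \<notin> \<Union>(fst ` S)"
      by blast
    have "a \<in> V" using sides t0 by blast
    then obtain t where t: "t \<in> S" "a \<notin> snd t" using a by blast
    have "a \<in> fst t - snd t" using sides[OF t(1)] \<open>a \<in> V\<close> t(2) by blast
    moreover have "b \<in> snd t - fst t" using b t(1) by blast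
    ultimately show False using U_no_cross_edge[OF _ e ab] assms t(1) by blast
  qed
  ultimately show ?thesis by (auto simp: sep_Join_def U_def is_osep_def)
qed

lemma card_submodular:
  assumes "finite A" "finite B" "finite C" "finite D"
  shows "card ((A \<union> C) \<inter> (B \<inter> D)) + card ((A \<inter> C) \<inter> (B \<union> D))
         \<le> card (A \<inter> B) + card (C \<inter> D)"
proof -
  let ?P = "(A \<union> C) \<inter> (B \<inter> D)" and ?Q = "(A \<inter> C) \<inter> (B \<union> D)"
  have "card ?P + card ?Q = card (?P \<union> ?Q) + card (?P \<inter> ?Q)"
    by (rule card_Un_Int) (use assms in auto)
  also have "card (?P \<union> ?Q) \<le> card ((A \<inter> B) \<union> (C \<inter> D))"
    by (rule card_mono) (use assms in auto)
  also have "?P \<inter> ?Q = (A \<inter> B) \<inter> (C \<inter> D)" by auto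
  also have "card ((A \<inter> B) \<union> (C \<inter> D)) + card ((A \<inter> B) \<inter> (C \<inter> D)) = card (A \<inter> B) + card (C \<inter> D)"
    by (rule card_Un_Int[symmetric]) (use assms in auto)
  finally show ?thesis by simp
qed

lemma sep_order_submodular:
  assumes "finite V" "s \<in> U V E" "t \<in> U V E"
  shows "sep_order (sep_join s t) + sep_order (sep_meet s t) \<le> sep_order s + sep_order t"
proof -
  have "finite (fst s)" "finite (snd s)" "finite (fst t)" "finite (snd t)"
    using assms U_sides_subset finite_subset by metis+
  then show ?thesis
    using card_submodular by (simp add: sep_order_def sep_join_def sep_meet_def)
qed

text \<open>An order-minimal separation above r is linked to r: for s \<ge> r, the meet s \<and> x
  lies between r and x, so submodularity gives |s \<or> x| \<le> |s|.\<close>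
lemma min_above_linked:
  assumes "finite V" "x \<in> U V E" "min_above V E r x"
  shows "linked V E k x r"
  unfolding linked_def
proof (intro conjI ballI impI)
  show "sep_le r x" using assms(3) by (simp add: min_above_def)
  fix s assume sS: "s \<in> Sk V E k" and rs: "sep_le r s \<and> s \<noteq> inv r"
  have sU: "s \<in> U V E" using sS by (simp add: Sk_iff)
  have "sep_le r (sep_meet s x)" "sep_le (sep_meet s x) x"
    using rs \<open>sep_le r x\<close> by (auto simp: sep_le_def sep_meet_def)
  then have "sep_order x \<le> sep_order (sep_meet s x)"
    using assms(3) meet_U[OF sU assms(2)] by (simp add: min_above_def)
  then have "sep_order (sep_join s x) \<le> sep_order s"
    using sep_order_submodular[OF assms(1) sU assms(2)] by linarith
  then show "sep_join s x \<in> Sk V E k"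
    using sS join_U[OF sU assms(2)] by (simp add: Sk_iff)
qed

text \<open>If F^w_k does not force r = (A,B), then the star {(B,A)} is not in F^w_k, so |A| \<ge> w.\<close>
lemma not_forced_card:
  assumes "r \<in> Sk V E k" "\<not> forces (Fwk V E w k) r"
  shows "w \<le> card (fst r)"
proof -
  have "is_star {inv r}" "finite {inv r}" "{inv r} \<subseteq> Sk V E k"
    using inv_Sk[OF assms(1)] by (auto simp: is_star_def)
  moreover have "{inv r} \<notin> Fwk V E w k" using assms(2) by (simp add: forces_def)
  ultimately show ?thesis by (auto simp: Fwk_def inv_def)
qed

text \<open>Hence an unforced r is not small (r \<le> inv r would force A \<subseteq> B, i.e. |A| < k).\<close>
lemma not_forced_not_small:
  assumes "r \<in> Sk V E k" "\<not> forces (Fwk V E w k) r" "k \<le> w"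
  shows "\<not> sep_le r (inv r)"
proof
  assume "sep_le r (inv r)"
  then have "fst r \<inter> snd r = fst r" by (auto simp: sep_le_def inv_def)
  then show False using assms not_forced_card[OF assms(1,2)] by (simp add: Sk_def)
qed

lemma star_shift_one:
  assumes "is_star \<sigma>" "s1 \<in> \<sigma>"
  shows "is_star (insert (sep_join s1 x) ((\<lambda>t. inv (sep_join (inv t) x)) ` (\<sigma> - {s1})))"
    (is "is_star (insert ?a (?g ` ?T))")
proof -
  have le: "sep_le t (inv t')" if "t \<in> \<sigma>" "t' \<in> \<sigma>" "t \<noteq> t'" for t t'
    using assms(1) that by (simp add: is_star_def)
  have head: "sep_le ?a (inv (?g t))" "sep_le (?g t) (inv ?a)" if "t \<in> ?T" for t
    using le[of t s1] that assms(2) by (auto simp: sep_le_def inv_def sep_join_def)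
  have tail: "sep_le (?g t) (inv (?g t'))" if "t \<in> ?T" "t' \<in> ?T" "?g t \<noteq> ?g t'" for t t'
    using le[of t t'] that by (auto simp: sep_le_def inv_def sep_join_def)
  show ?thesis
    unfolding is_star_def using head tail by blast
qed

text \<open>The counting behind the shifting estimate: a set-theoretic form of the
  comparison of x = (X,Y) with the competitor (X \<inter> Z, Y \<union> D).\<close>
lemma card_shift_bound:
  fixes X Y Z D F :: "'a set"
  assumes "finite X" "finite F" "D \<subseteq> F" "card (X \<inter> Y) \<le> card (X \<inter> Z \<inter> (Y \<union> D))"
  shows "card (F \<inter> Y \<inter> (Z \<union> X)) \<le> card (F \<inter> Z)"
proof -
  have split_XY: "card (X \<inter> Y) = card (X \<inter> Y \<inter> Z) + card (X \<inter> Y - Z)"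
    using assms(1) by (subst card_Un_disjoint[symmetric]) (auto intro: arg_cong[where f = card])
  have split_comp: "card (X \<inter> Z \<inter> (Y \<union> D)) = card (X \<inter> Y \<inter> Z) + card (X \<inter> Z \<inter> D - Y)"
    using assms(1) by (subst card_Un_disjoint[symmetric]) (auto intro: arg_cong[where f = card])
  have split_FZ: "card (F \<inter> Z) = card (F \<inter> Y \<inter> Z) + card (F \<inter> Z - Y)"
    using assms(2) by (subst card_Un_disjoint[symmetric]) (auto intro: arg_cong[where f = card])
  have "card (F \<inter> Y \<inter> (Z \<union> X)) \<le> card (F \<inter> Y \<inter> Z \<union> (X \<inter> Y - Z))"
    using assms(1,2) by (intro card_mono) auto
  also have "\<dots> \<le> card (F \<inter> Y \<inter> Z) + card (X \<inter> Y - Z)"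
    by (rule card_Un_le)
  also have "card (X \<inter> Y - Z) \<le> card (X \<inter> Z \<inter> D - Y)"
    using assms(4) split_XY split_comp by linarith
  also have "card (X \<inter> Z \<inter> D - Y) \<le> card (F \<inter> Z - Y)"
    using assms(2,3) by (intro card_mono) auto
  finally show ?thesis using split_FZ by linarith
qed

text \<open>Shifting does not enlarge the intersection of B-sides: with F the B-side of s1 and
  T the other star elements, compare x with its meet with inv (\<Or> T), which lies between r and x.\<close>
lemma shifted_Bsides_card:
  assumes "finite V" "x \<in> U V E" "min_above V E r x" "T \<subseteq> U V E"
    and "\<forall>t\<in>T. sep_le r (inv t)" "\<forall>t\<in>T. fst t \<subseteq> F" "F \<subseteq> V"
  shows "card (F \<inter> snd x \<inter> (\<Inter>t\<in>T. snd t \<union> fst x)) \<le> card (F \<inter> \<Inter>(snd ` T))"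
proof -
  define Z where "Z = V \<inter> \<Inter>(snd ` T)"
  define D where "D = \<Union>(fst ` T)"
  define y where "y = sep_meet x (inv (sep_Join V T))"
  have xV: "fst x \<subseteq> V" using U_sides_subset[OF assms(2)] by simp
  have rx: "sep_le r x" using assms(3) by (simp add: min_above_def)
  have yU: "y \<in> U V E"
    unfolding y_def using assms(2,4) by (intro meet_U inv_U Join_U)
  have "sep_le r y" "sep_le y x"
    using rx xV assms(5) by (auto simp: y_def sep_le_def sep_meet_def inv_def sep_Join_def)
  then have "sep_order x \<le> sep_order y"
    using assms(3) yU by (simp add: min_above_def)
  then have "card (fst x \<inter> snd x) \<le> card (fst x \<inter> Z \<inter> (snd x \<union> D))"
    by (simp add: sep_order_def y_def sep_meet_def inv_def sep_Join_def Z_def D_def Int_assoc)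
  moreover have "finite (fst x)" "finite F"
    using assms(1,7) xV finite_subset by blast+
  moreover have "D \<subseteq> F" using assms(6) by (auto simp: D_def)
  ultimately have "card (F \<inter> snd x \<inter> (Z \<union> fst x)) \<le> card (F \<inter> Z)"
    by (rule card_shift_bound[rotated -1])
  moreover have "F \<inter> snd x \<inter> (\<Inter>t\<in>T. snd t \<union> fst x) = F \<inter> snd x \<inter> (Z \<union> fst x)"
    "F \<inter> \<Inter>(snd ` T) = F \<inter> Z"
    using assms(7) by (auto simp: Z_def)
  ultimately show ?thesis by simp
qed

lemma min_above_F_linked:
  assumes finV: "finite V" and kw: "k \<le> w" and rS: "r \<in> Sk V E k"
    and nf: "\<not> forces (Fwk V E w k) r" and xS: "x \<in> Sk V E k" and min: "min_above V E r x"
  shows "F_linked V E k (Fwk V E w k) x r"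
  unfolding F_linked_def
proof (intro conjI ballI impI)
  have xU: "x \<in> U V E" using xS by (simp add: Sk_iff)
  show link: "linked V E k x r" using min_above_linked[OF finV xU min] .
  fix \<sigma> assume \<sigma>F: "\<sigma> \<in> Fwk V E w k"
    and h: "is_star \<sigma> \<and> \<sigma> \<subseteq> S_ge V E k r - {inv r} \<and> (\<exists>s\<in>\<sigma>. sep_le r s)"
  then obtain s1 where s1: "s1 \<in> \<sigma>" "sep_le r s1" by blast
  define T where "T = \<sigma> - {s1}"
  have star: "is_star \<sigma>" and sub: "\<sigma> \<subseteq> S_ge V E k r - {inv r}" using h by auto
  have s1S: "s1 \<in> Sk V E k" "s1 \<noteq> inv r" using sub s1 by (auto simp: S_ge_def)
  have tS: "t \<in> Sk V E k" and t_s1: "sep_le t (inv s1)" if "t \<in> T" for t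
    using that sub star s1 by (auto simp: T_def S_ge_def is_star_def)
  \<comment> \<open>Since r is not small, r lies below s1 but not below any other element of the star.\<close>
  have not_rt: "\<not> sep_le r t" if "t \<in> T" for t
  proof
    assume "sep_le r t"
    then have "sep_le r (inv r)"
      using t_s1[OF that] s1(2) by (auto simp: sep_le_def inv_def)
    then show False using not_forced_not_small[OF rS nf kw] by contradiction
  qed
  have r_it: "sep_le r (inv t)" if "t \<in> T" for t
    using that sub not_rt[OF that] by (auto simp: T_def S_ge_def)
  have it_r: "inv t \<noteq> inv r" if "t \<in> T" for t
    using not_rt[OF that] inv_inv by (metis sep_le_def order_refl)
  define g where "g t = inv (sep_join (inv t) x)" for t
  have img: "shift r x ` \<sigma> = insert (sep_join s1 x) (g ` T)"
    using s1 s1S(2) not_rt by (auto simp: shift_def g_def T_def)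
  have "is_star (shift r x ` \<sigma>)"
    unfolding img g_def T_def using star_shift_one[OF star s1(1)] .
  moreover have "shift r x ` \<sigma> \<subseteq> Sk V E k"
  proof -
    have "sep_join s1 x \<in> Sk V E k" using link s1S s1(2) by (simp add: linked_def)
    moreover have "g t \<in> Sk V E k" if "t \<in> T" for t
      unfolding g_def using link inv_Sk[OF tS[OF that]] r_it[OF that] it_r[OF that]
      by (intro inv_Sk) (simp add: linked_def)
    ultimately show ?thesis by (auto simp: img)
  qed
  moreover have "finite (shift r x ` \<sigma>)" using \<sigma>F by (simp add: Fwk_def)
  moreover have "card (\<Inter>(snd ` shift r x ` \<sigma>)) \<le> card (\<Inter>(snd ` \<sigma>))"
  proof -
    have "\<Inter>(snd ` shift r x ` \<sigma>) = snd s1 \<inter> snd x \<inter> (\<Inter>t\<in>T. snd t \<union> fst x)"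
      by (auto simp: img g_def inv_def sep_join_def)
    moreover have "\<Inter>(snd ` \<sigma>) = snd s1 \<inter> \<Inter>(snd ` T)"
      using s1(1) by (auto simp: T_def)
    moreover have "card (snd s1 \<inter> snd x \<inter> (\<Inter>t\<in>T. snd t \<union> fst x)) \<le> card (snd s1 \<inter> \<Inter>(snd ` T))"
    proof (rule shifted_Bsides_card[OF finV xU min])
      show "T \<subseteq> U V E" using tS by (auto simp: Sk_iff)
      show "\<forall>t\<in>T. sep_le r (inv t)" using r_it by blast
      show "\<forall>t\<in>T. fst t \<subseteq> snd s1" using t_s1 by (auto simp: sep_le_def inv_def)
      show "snd s1 \<subseteq> V" using s1S(1) U_sides_subset by (meson Sk_iff)
    qed
    ultimately show ?thesis by simp
  qed
  ultimately show "shift r x ` \<sigma> \<in> Fwk V E w k"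
    using \<sigma>F by (auto simp: Fwk_def)
qed

lemma min_between_exists:
  assumes "r \<in> U V E" "sep_le r r'"
  obtains x where "x \<in> U V E" "sep_order x \<le> sep_order r"
    "min_above V E r x" "min_above V E (inv r') (inv x)"
proof -
  let ?between = "\<lambda>y. y \<in> U V E \<and> sep_le r y \<and> sep_le y r'"
  have "?between r" using assms by (simp add: sep_le_def)
  then obtain x where x: "?between x" and least: "\<And>y. ?between y \<Longrightarrow> sep_order x \<le> sep_order y"
    using ex_has_least_nat[of ?between r sep_order] by blast
  have "min_above V E r x"
    using x least sep_le_trans by (simp add: min_above_def) blast
  moreover have "min_above V E (inv r') (inv x)"
    unfolding min_above_def
  proof (intro conjI ballI impI)
    show "sep_le (inv r') (inv x)" using x by (simp add: sep_le_inv_iff)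
    fix y assume "y \<in> U V E" "sep_le (inv r') y \<and> sep_le y (inv x)"
    then have "?between (inv y)"
      using x inv_U sep_le_inv_iff[of y "inv r'"] sep_le_inv_iff[of "inv x" y] sep_le_trans
      by (metis inv_inv)
    then show "sep_order (inv x) \<le> sep_order y" using least by fastforce
  qed
  ultimately show ?thesis using that x least \<open>?between r\<close> by blast
qed

theorem lemma5p18:
  fixes V :: "'a set" and E :: "'a set set" and k w :: nat
  assumes "graph V E" and "V \<noteq> {}" and "0 < k" and "k \<le> w"
  shows "F_separable V E k (Fwk V E w k)"
  unfolding F_separable_def
proof (intro ballI impI)
  fix r r' assume rS: "r \<in> Sk V E k" and r'S: "r' \<in> Sk V E k"
    and h: "sep_le r r' \<and> \<not> forces (Fwk V E w k) r \<and> \<not> forces (Fwk V E w k) (inv r')"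
  have finV: "finite V" using assms(1) by (simp add: graph_def)
  obtain x where xU: "x \<in> U V E" and "sep_order x \<le> sep_order r"
    and min_r: "min_above V E r x" and min_r': "min_above V E (inv r') (inv x)"
    using min_between_exists[of r V E r'] rS h by (auto simp: Sk_iff)
  then have xS: "x \<in> Sk V E k" using rS by (simp add: Sk_iff)
  have "F_linked V E k (Fwk V E w k) x r"
    using min_above_F_linked[OF finV assms(4) rS _ xS min_r] h by blast
  moreover have "F_linked V E k (Fwk V E w k) (inv x) (inv r')"
    using min_above_F_linked[OF finV assms(4) inv_Sk[OF r'S] _ inv_Sk[OF xS] min_r'] h by blast
  ultimately show "\<exists>X Y. (X, Y) \<in> Sk V E k \<and> F_linked V E k (Fwk V E w k) (X, Y) r \<and>
      F_linked V E k (Fwk V E w k) (Y, X) (inv r')"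
    using xS by (cases x) (auto simp: inv_def)
qed

end
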